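(* Consider an $L$-layer graph convolutional network on a graph with vertex set $\mathcal V$ and fixed weights $W=(W^{(0)},\dots,W^{(L-1)})$, whose exact activations are $H^{(0)}=X$, $Z^{(l+1)}=PH^{(l)}W^{(l)}$, $H^{(l+1)}=\sigma(Z^{(l+1)})$. Run the control-variate (CV) forward procedure described in the context with the constant weight sequence $W_i=W$ for all iterations $i$, with arbitrary initial historical activations and arbitrary sample sizes $D^{(l)}\ge 1$. Then for every iteration $i>LI$ (i.e. after $L$ full epochs), the activations computed by CV are exact: for each $l\in\{1,\dots,L\}$ and every node $u$ whose $z^{(l)}_u$ is computed at iteration $i$ we have $z^{(l)}_{CV,i,u}=z^{(l)}_u$ (the $u$-th row of $Z^{(l)}$), and for each $l\in\{0,\dots,L-1\}$ and every node $u$ whose $h^{(l)}_u$ is computed at iteration $i$ we have $h^{(l)}_{CV,i,u}=h^{(l)}_u$; i.e. $Z^{(l)}_{CV,i}=Z^{(l)}$ and $H^{(l)}_{CV,i}=H^{(l)}$. This holds for every realization of the random minibatches and neighbor samples.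
   Context: Graph: undirected $\mathcal G=(\mathcal V,\mathcal E)$ with $V=|\mathcal V|$, adjacency matrix $A$, $\tilde A=A+I$, $\tilde D$ diagonal with $\tilde D_{uu}=\sum_v\tilde A_{uv}$, and propagation matrix $P=\tilde D^{-1/2}\tilde A\tilde D^{-1/2}$. $\mathbf n(u)$ is the neighbor set of $u$ (the $v$ with $P_{uv}\ne0$), $n(u)=|\mathbf n(u)|$. $X$ is the input feature matrix, $\sigma$ an activation function applied elementwise; rows of $H^{(l)}$, $Z^{(l)}$ are $h^{(l)}_v$, $z^{(l)}_v$. CV procedure: For each layer $l\in\{0,\dots,L-1\}$ a historical activation $\bar h^{(l)}_v$ is stored for every $v\in\mathcal V$ (initialized arbitrarily). The algorithm runs in epochs; in each epoch $\mathcal V$ (all vertices) is randomly partitioned into $I$ minibatches $\mathcal V_1,\dots,\mathcal V_I$, and iteration $i$ processes one minibatch $\mathcal V_i$ with weights $W_i$. At iteration $i$: set $\mathbf r^{(L)}=\mathcal V_i$; for $l=L-1,\dots,0$, for each $u\in\mathbf r^{(l+1)}$ draw a uniformly random subset $\hat{\mathbf n}^{(l)}(u)\subseteq\mathbf n(u)$ of size $\min(D^{(l)},n(u))$ without replacement, and let $\mathbf r^{(l)}=\mathbf r^{(l+1)}\cup\bigcup_{u\in\mathbf r^{(l+1)}}\hat{\mathbf n}^{(l)}(u)$. Define $\hat P^{(l)}_{uv}=\frac{n(u)}{D^{(l)}}P_{uv}$ if $v\in\hat{\mathbf n}^{(l)}(u)$ and $0$ otherwise. Forward pass: $h^{(0)}_{CV,i,v}=x_v$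 for $v\in\mathbf r^{(0)}$, and for $l=0,\dots,L-1$ and $u\in\mathbf r^{(l+1)}$, $$z^{(l+1)}_{CV,i,u}=\Big(\sum_{v\in\hat{\mathbf n}^{(l)}(u)}\hat P^{(l)}_{uv}\big(h^{(l)}_{CV,i,v}-\bar h^{(l)}_v\big)+\sum_{v\in\mathbf n(u)}P_{uv}\bar h^{(l)}_v\Big)W_i^{(l)},\quad h^{(l+1)}_{CV,i,u}=\sigma(z^{(l+1)}_{CV,i,u}),$$ using the histories stored before iteration $i$ (in matrix form $Z^{(l+1)}=(\hat P^{(l)}(H^{(l)}-\bar H^{(l)})+P\bar H^{(l)})W^{(l)}$). After the forward (and optional backward) pass, set $\bar h^{(l)}_v\leftarrow h^{(l)}_{CV,i,v}$ for every $l\in\{0,\dots,L-1\}$ and every $v\in\mathbf r^{(l)}$. *)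

theory Defs
  imports Complex_Main
begin

text \<open>The undirected graph is
 given by a symmetric adjacency relation A (A u v = True iff A_uv = 1).
 Row vectors are functions nat => real (entry k of a row); the width of
 layer l is d l.  Weight matrices: W l k j = entry (k,j) of W^(l).\<close>

definition adj :: "('v \<Rightarrow> 'v \<Rightarrow> bool) \<Rightarrow> 'v \<Rightarrow> 'v \<Rightarrow> real" where
  "adj A u v = (if A u v then 1 else 0)"

definition adj_tilde :: "('v \<Rightarrow> 'v \<Rightarrow> bool) \<Rightarrow> 'v \<Rightarrow> 'v \<Rightarrow> real" where
  "adj_tilde A u v = adj A u v + (if u = v then 1 else 0)"

definition deg_tilde :: "('v::finite \<Rightarrow> 'v \<Rightarrow> bool) \<Rightarrow> 'v \<Rightarrow> real" where
  "deg_tilde A u = (\<Sum>v\<in>UNIV. adj_tilde A u v)"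

definition prop_mat :: "('v::finite \<Rightarrow> 'v \<Rightarrow> bool) \<Rightarrow> 'v \<Rightarrow> 'v \<Rightarrow> real" where
  "prop_mat A u v = adj_tilde A u v / (sqrt (deg_tilde A u) * sqrt (deg_tilde A v))"

definition nbr :: "('v::finite \<Rightarrow> 'v \<Rightarrow> bool) \<Rightarrow> 'v \<Rightarrow> 'v set" where
  "nbr A u = {v. prop_mat A u v \<noteq> 0}"

fun gcn_h :: "('v::finite \<Rightarrow> 'v \<Rightarrow> bool) \<Rightarrow> ('v \<Rightarrow> nat \<Rightarrow> real) \<Rightarrow> (nat \<Rightarrow> nat \<Rightarrow> nat \<Rightarrow> real)
    \<Rightarrow> (nat \<Rightarrow> nat) \<Rightarrow> (real \<Rightarrow> real) \<Rightarrow> nat \<Rightarrow> 'v \<Rightarrow> nat \<Rightarrow> real" where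
  "gcn_h A X W d \<sigma> 0 = X"
| "gcn_h A X W d \<sigma> (Suc l) = (\<lambda>u j. \<sigma> (\<Sum>k<d l. (\<Sum>v\<in>UNIV. prop_mat A u v * gcn_h A X W d \<sigma> l v k) * W l k j))"

text \<open>Z^(l) for l >= 1.\<close>
definition gcn_z :: "('v::finite \<Rightarrow> 'v \<Rightarrow> bool) \<Rightarrow> ('v \<Rightarrow> nat \<Rightarrow> real) \<Rightarrow> (nat \<Rightarrow> nat \<Rightarrow> nat \<Rightarrow> real)
    \<Rightarrow> (nat \<Rightarrow> nat) \<Rightarrow> (real \<Rightarrow> real) \<Rightarrow> nat \<Rightarrow> 'v \<Rightarrow> nat \<Rightarrow> real" where
  "gcn_z A X W d \<sigma> l = (\<lambda>u j. (\<Sum>k<d (l - 1). (\<Sum>v\<in>UNIV. prop_mat A u v * gcn_h A X W d \<sigma> (l - 1) v k) * W (l - 1) k j))"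

text \<open>Receptive fields of one iteration: S l u is the sampled neighbour set
 hat n^(l)(u), B the minibatch.  rf_aux S B L m = r^(L - m).\<close>
fun rf_aux :: "(nat \<Rightarrow> 'v \<Rightarrow> 'v set) \<Rightarrow> 'v set \<Rightarrow> nat \<Rightarrow> nat \<Rightarrow> 'v set" where
  "rf_aux S B L 0 = B"
| "rf_aux S B L (Suc m) = rf_aux S B L m \<union> (\<Union>u\<in>rf_aux S B L m. S (L - Suc m) u)"

definition rf :: "(nat \<Rightarrow> 'v \<Rightarrow> 'v set) \<Rightarrow> 'v set \<Rightarrow> nat \<Rightarrow> nat \<Rightarrow> 'v set" where
  "rf S B L l = rf_aux S B L (L - l)"

definition phat :: "('v::finite \<Rightarrow> 'v \<Rightarrow> bool) \<Rightarrow> (nat \<Rightarrow> nat) \<Rightarrow> nat \<Rightarrow> 'v \<Rightarrow> 'v \<Rightarrow> real" where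
  "phat A D l u v = real (card (nbr A u)) / real (D l) * prop_mat A u v"

text \<open>CV pre-activation of layer l+1 at node u, given the layer-l CV activations
 hprev, histories hist (hist l v = bar h^(l)_v) and samples S.\<close>
definition cv_zstep :: "('v::finite \<Rightarrow> 'v \<Rightarrow> bool) \<Rightarrow> (nat \<Rightarrow> nat \<Rightarrow> nat \<Rightarrow> real) \<Rightarrow> (nat \<Rightarrow> nat)
    \<Rightarrow> (nat \<Rightarrow> nat) \<Rightarrow> (nat \<Rightarrow> 'v \<Rightarrow> nat \<Rightarrow> real) \<Rightarrow> (nat \<Rightarrow> 'v \<Rightarrow> 'v set)
    \<Rightarrow> ('v \<Rightarrow> nat \<Rightarrow> real) \<Rightarrow> nat \<Rightarrow> 'v \<Rightarrow> nat \<Rightarrow> real" where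
  "cv_zstep A W d D hist S hprev l u j =
     (\<Sum>k<d l. ((\<Sum>v\<in>S l u. phat A D l u v * (hprev v k - hist l v k))
               + (\<Sum>v\<in>nbr A u. prop_mat A u v * hist l v k)) * W l k j)"

fun cv_h :: "('v::finite \<Rightarrow> 'v \<Rightarrow> bool) \<Rightarrow> ('v \<Rightarrow> nat \<Rightarrow> real) \<Rightarrow> (nat \<Rightarrow> nat \<Rightarrow> nat \<Rightarrow> real)
    \<Rightarrow> (nat \<Rightarrow> nat) \<Rightarrow> (real \<Rightarrow> real) \<Rightarrow> (nat \<Rightarrow> nat) \<Rightarrow> (nat \<Rightarrow> 'v \<Rightarrow> nat \<Rightarrow> real)
    \<Rightarrow> (nat \<Rightarrow> 'v \<Rightarrow> 'v set) \<Rightarrow> nat \<Rightarrow> 'v \<Rightarrow> nat \<Rightarrow> real" where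
  "cv_h A X W d \<sigma> D hist S 0 = X"
| "cv_h A X W d \<sigma> D hist S (Suc l) =
     (\<lambda>u j. \<sigma> (cv_zstep A W d D hist S (cv_h A X W d \<sigma> D hist S l) l u j))"

definition cv_z :: "('v::finite \<Rightarrow> 'v \<Rightarrow> bool) \<Rightarrow> ('v \<Rightarrow> nat \<Rightarrow> real) \<Rightarrow> (nat \<Rightarrow> nat \<Rightarrow> nat \<Rightarrow> real)
    \<Rightarrow> (nat \<Rightarrow> nat) \<Rightarrow> (real \<Rightarrow> real) \<Rightarrow> (nat \<Rightarrow> nat) \<Rightarrow> (nat \<Rightarrow> 'v \<Rightarrow> nat \<Rightarrow> real)
    \<Rightarrow> (nat \<Rightarrow> 'v \<Rightarrow> 'v set) \<Rightarrow> nat \<Rightarrow> 'v \<Rightarrow> nat \<Rightarrow> real" where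
  "cv_z A X W d \<sigma> D hist S l =
     cv_zstep A W d D hist S (cv_h A X W d \<sigma> D hist S (l - 1)) (l - 1)"

text \<open>Histories after n iterations (iterations are numbered 1,2,...; iteration i
 uses batch i, samples samp i and the histories cv_hist ... (i - 1)).\<close>
fun cv_hist :: "('v::finite \<Rightarrow> 'v \<Rightarrow> bool) \<Rightarrow> ('v \<Rightarrow> nat \<Rightarrow> real) \<Rightarrow> (nat \<Rightarrow> nat \<Rightarrow> nat \<Rightarrow> real)
    \<Rightarrow> (nat \<Rightarrow> nat) \<Rightarrow> (real \<Rightarrow> real) \<Rightarrow> (nat \<Rightarrow> nat) \<Rightarrow> nat
    \<Rightarrow> (nat \<Rightarrow> 'v \<Rightarrow> nat \<Rightarrow> real) \<Rightarrow> (nat \<Rightarrow> 'v set) \<Rightarrow> (nat \<Rightarrow> nat \<Rightarrow> 'v \<Rightarrow> 'v set)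
    \<Rightarrow> nat \<Rightarrow> nat \<Rightarrow> 'v \<Rightarrow> nat \<Rightarrow> real" where
  "cv_hist A X W d \<sigma> D L hist0 batch samp 0 = hist0"
| "cv_hist A X W d \<sigma> D L hist0 batch samp (Suc n) =
     (\<lambda>l v. if l < L \<and> v \<in> rf (samp (Suc n)) (batch (Suc n)) L l
            then cv_h A X W d \<sigma> D (cv_hist A X W d \<sigma> D L hist0 batch samp n) (samp (Suc n)) l v
            else cv_hist A X W d \<sigma> D L hist0 batch samp n l v)"

end

theory Submission
  imports Defs
begin

text \<open>Once the stored histories of layer l are exact, the control-variate correction
  \<open>hat P (H - bar H)\<close> vanishes on every sampled neighbour whose layer-l activation is exact,
  and the remaining term \<open>P bar H\<close> is exactly \<open>P H\<close>; so the CV forward pass reproduces the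
  exact network up to the first layer whose histories are stale.  Since every vertex lies in
  some minibatch of each epoch, and a vertex of the minibatch lies in every receptive field,
  by induction on l all layer-l histories are exact after l + 1 epochs and stay exact
  afterwards.\<close>

lemma batch_subset_rf: "B \<subseteq> rf S B L l"
proof -
  have "B \<subseteq> rf_aux S B L m" for m
    by (induction m) auto
  then show ?thesis
    unfolding rf_def .
qed

lemma samples_subset_rf:
  assumes "l < L" "u \<in> rf S B L (Suc l)"
  shows "S l u \<subseteq> rf S B L l"
proof -
  have "L - l = Suc (L - Suc l)" and "L - Suc (L - Suc l) = l"
    using assms(1) by simp_all
  then show ?thesis
    using assms(2) unfolding rf_def by auto
qed

lemma cv_zstep_exact:
  fixes A :: "'v::finite \<Rightarrow> 'v \<Rightarrow> bool"
  assumes hist_exact: "\<forall>v. hist l v = gcn_h A X W d \<sigma> l v"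
    and prev_exact: "\<forall>v\<in>S l u. hprev v = gcn_h A X W d \<sigma> l v"
  shows "cv_zstep A W d D hist S hprev l u = gcn_z A X W d \<sigma> (Suc l) u"
proof -
  have correction: "(\<Sum>v\<in>S l u. phat A D l u v * (hprev v k - hist l v k)) = 0" for k
    using assms by (intro sum.neutral) auto
  have "(\<Sum>v\<in>nbr A u. prop_mat A u v * hist l v k)
      = (\<Sum>v\<in>UNIV. prop_mat A u v * gcn_h A X W d \<sigma> l v k)" for k
    using hist_exact by (simp, intro sum.mono_neutral_left) (auto simp: nbr_def)
  with correction show ?thesis
    unfolding cv_zstep_def gcn_z_def by simp
qed

lemma cv_h_exact:
  fixes A :: "'v::finite \<Rightarrow> 'v \<Rightarrow> bool"
  assumes "\<forall>l'<l. \<forall>v. hist l' v = gcn_h A X W d \<sigma> l' v" "l \<le> L" "u \<in> rf S B L l"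
  shows "cv_h A X W d \<sigma> D hist S l u = gcn_h A X W d \<sigma> l u"
  using assms
proof (induction l arbitrary: u)
  case 0
  then show ?case by simp
next
  case (Suc l)
  have "S l u \<subseteq> rf S B L l"
    using Suc.prems by (intro samples_subset_rf) auto
  with Suc have "\<forall>v\<in>S l u. cv_h A X W d \<sigma> D hist S l v = gcn_h A X W d \<sigma> l v"
    by auto
  with Suc.prems have "cv_zstep A W d D hist S (cv_h A X W d \<sigma> D hist S l) l u
      = gcn_z A X W d \<sigma> (Suc l) u"
    by (intro cv_zstep_exact) auto
  then show ?case
    by (simp add: gcn_z_def)
qed

lemma cv_z_exact:
  fixes A :: "'v::finite \<Rightarrow> 'v \<Rightarrow> bool"
  assumes "\<forall>l'\<le>l. \<forall>v. hist l' v = gcn_h A X W d \<sigma> l' v" "l < L" "u \<in> rf S B L (Suc l)"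
  shows "cv_z A X W d \<sigma> D hist S (Suc l) u = gcn_z A X W d \<sigma> (Suc l) u"
proof -
  have "\<forall>v\<in>S l u. cv_h A X W d \<sigma> D hist S l v = gcn_h A X W d \<sigma> l v"
    using assms(1,2) samples_subset_rf[OF assms(2,3)] by (auto intro: cv_h_exact[where L = L])
  then show ?thesis
    using assms(1) unfolding cv_z_def by (simp add: cv_zstep_exact)
qed

lemma cv_hist_Suc_exact:
  fixes A :: "'v::finite \<Rightarrow> 'v \<Rightarrow> bool"
  assumes "l < L"
    and "\<forall>l'<l. \<forall>v. cv_hist A X W d \<sigma> D L hist0 batch samp n l' v = gcn_h A X W d \<sigma> l' v"
  shows "cv_hist A X W d \<sigma> D L hist0 batch samp (Suc n) l v =
    (if v \<in> rf (samp (Suc n)) (batch (Suc n)) L l then gcn_h A X W d \<sigma> l v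
     else cv_hist A X W d \<sigma> D L hist0 batch samp n l v)"
  using assms cv_h_exact[OF assms(2), where L = L and B = "batch (Suc n)"] by simp

lemma cv_hist_exact_after_epochs:
  fixes A :: "'v::finite \<Rightarrow> 'v \<Rightarrow> bool"
  assumes cover: "\<forall>e. (\<Union>k\<in>{1..I}. batch (e * I + k)) = UNIV"
  shows "l < L \<Longrightarrow> Suc l * I \<le> n \<Longrightarrow>
    cv_hist A X W d \<sigma> D L hist0 batch samp n l v = gcn_h A X W d \<sigma> l v"
proof (induction l arbitrary: n v rule: less_induct)
  case (less l)
  let ?H = "cv_hist A X W d \<sigma> D L hist0 batch samp"
  have update: "?H (Suc m) l v =
      (if v \<in> rf (samp (Suc m)) (batch (Suc m)) L l then gcn_h A X W d \<sigma> l v else ?H m l v)"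
    if "l * I \<le> m" for m
  proof (rule cv_hist_Suc_exact[OF \<open>l < L\<close>], intro allI impI)
    fix l' v assume "l' < l"
    moreover from this have "Suc l' * I \<le> m"
      using that mult_le_mono1[of "Suc l'" l I] by simp
    ultimately show "?H m l' v = gcn_h A X W d \<sigma> l' v"
      using less by auto
  qed
  obtain k where k: "k \<in> {1..I}" "v \<in> batch (l * I + k)"
    using cover by blast
  have written: "?H (l * I + k) l v = gcn_h A X W d \<sigma> l v"
  proof -
    obtain k' where "k = Suc k'"
      using k(1) by (cases k) auto
    with k(2) have "v \<in> rf (samp (Suc (l * I + k'))) (batch (Suc (l * I + k'))) L l"
      using batch_subset_rf by (metis add_Suc_right subsetD)
    with \<open>k = Suc k'\<close> show ?thesis
      using update[of "l * I + k'"] by simp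
  qed
  have "l * I + k \<le> n"
    using k less.prems by auto
  then show ?case
  proof (induction n rule: dec_induct)
    case base
    show ?case by (rule written)
  next
    case (step m)
    then show ?case
      using update[of m] by simp
  qed
qed

theorem theorem1:
  fixes A :: "'v::finite \<Rightarrow> 'v \<Rightarrow> bool"
    and X :: "'v \<Rightarrow> nat \<Rightarrow> real"
    and W :: "nat \<Rightarrow> nat \<Rightarrow> nat \<Rightarrow> real"
    and d :: "nat \<Rightarrow> nat"
    and \<sigma> :: "real \<Rightarrow> real"
    and D :: "nat \<Rightarrow> nat"
    and L I :: nat
    and hist0 :: "nat \<Rightarrow> 'v \<Rightarrow> nat \<Rightarrow> real"
    and batch :: "nat \<Rightarrow> 'v set"
    and samp :: "nat \<Rightarrow> nat \<Rightarrow> 'v \<Rightarrow> 'v set"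
    and i :: nat
  assumes sym: "\<forall>u v. A u v = A v u"
    and D_pos: "\<forall>l<L. D l \<ge> 1"
    and part_nonempty: "\<forall>e. \<forall>k\<in>{1..I}. batch (e * I + k) \<noteq> {}"
    and part_disjoint: "\<forall>e. \<forall>k1\<in>{1..I}. \<forall>k2\<in>{1..I}. k1 \<noteq> k2 \<longrightarrow>
                           batch (e * I + k1) \<inter> batch (e * I + k2) = {}"
    and part_cover: "\<forall>e. (\<Union>k\<in>{1..I}. batch (e * I + k)) = UNIV"
    and sampling: "\<forall>j\<ge>1. \<forall>l<L. \<forall>u\<in>rf (samp j) (batch j) L (Suc l).
                      samp j l u \<subseteq> nbr A u \<and> card (samp j l u) = min (D l) (card (nbr A u))"
    and i_gt: "i > L * I"
  shows "(\<forall>l\<in>{1..L}. \<forall>u\<in>rf (samp i) (batch i) L l.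
            cv_z A X W d \<sigma> D (cv_hist A X W d \<sigma> D L hist0 batch samp (i - 1)) (samp i) l u
              = gcn_z A X W d \<sigma> l u)
       \<and> (\<forall>l<L. \<forall>u\<in>rf (samp i) (batch i) L l.
            cv_h A X W d \<sigma> D (cv_hist A X W d \<sigma> D L hist0 batch samp (i - 1)) (samp i) l u
              = gcn_h A X W d \<sigma> l u)"
proof -
  let ?H = "cv_hist A X W d \<sigma> D L hist0 batch samp (i - 1)"
  have hist_exact: "\<forall>l<L. \<forall>v. ?H l v = gcn_h A X W d \<sigma> l v"
  proof (intro allI impI)
    fix l v assume "l < L"
    moreover from this have "Suc l * I \<le> i - 1"
      using i_gt mult_le_mono1[of "Suc l" L I] by simp
    ultimately show "?H l v = gcn_h A X W d \<sigma> l v"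
      by (rule cv_hist_exact_after_epochs[OF part_cover])
  qed
  show ?thesis
  proof (intro conjI ballI allI impI)
    fix l u assume "l \<in> {1..L}" "u \<in> rf (samp i) (batch i) L l"
    then obtain l0 where "l = Suc l0" "l0 < L" "u \<in> rf (samp i) (batch i) L (Suc l0)"
      by (cases l) auto
    then show "cv_z A X W d \<sigma> D ?H (samp i) l u = gcn_z A X W d \<sigma> l u"
      using hist_exact by (auto intro: cv_z_exact)
  next
    fix l u assume "l < L" "u \<in> rf (samp i) (batch i) L l"
    then show "cv_h A X W d \<sigma> D ?H (samp i) l u = gcn_h A X W d \<sigma> l u"
      using hist_exact by (auto intro: cv_h_exact[where L = L])
  qed
qed

end
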